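(* Let $p_0$ be a probability density w.r.t. a $\sigma$-finite measure $\pi$ on $(\mathcal X,\mathcal B)$, $\mathbb P_0(B):=\int_Bp_0\,d\pi$, and $Q:\mathcal X\to(0,\infty)$ measurable with $Q_*:=\operatorname*{ess\,sup}_\pi Q\in(0,\infty)$, $Q\le Q_*$ everywhere, and $\mathbb P_0(A)>0$ where $A=\{Q=Q_*\}$. Fix $\eta>0$ and suppose there exists $\delta>0$ with $$\mathbb P_0\bigl(\{x:Q_*-\delta\le Q(x)<Q_*\}\bigr)>0\quad\text{and}\quad (Q_*-\delta)e^\eta\ge Q_*.$$ Then there exists a measurable $\Delta r$ with $\|\Delta r\|_\infty=\eta$ such that $\mathbb P_0(A_{\Delta r})>0$ and $d_{\rm TV}(p_{\infty,\Delta r},p_{\infty,0})=1$.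
   Context: For $\Delta r\in L^\infty(\pi)$: $Q_{\Delta r}(x):=Q(x)e^{\Delta r(x)}$, $Q_{*,\Delta r}:=\operatorname*{ess\,sup}_\pi Q_{\Delta r}$, $A_{\Delta r}:=\{x:Q_{\Delta r}(x)=Q_{*,\Delta r}\}$, and, when $\mathbb P_0(A_{\Delta r})>0$, $p_{\infty,\Delta r}(x):=p_0(x)\mathbf 1_{A_{\Delta r}}(x)/\mathbb P_0(A_{\Delta r})$ (with $A_0=A$). In the paper $Q(x)=e^{r(x)}\mathbb E[e^{\varepsilon(x)}]$ for a reward $r$ and noise field $\varepsilon$, so $Q_{\Delta r}$ corresponds to the perturbed reward $r+\Delta r$, and $p_{\infty,\Delta r}$ is the limit of the purely synthetic retraining dynamics under the perturbed reward. $d_{\rm TV}(p,q)=\frac12\int|p-q|\,d\pi$. *)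

theory Defs
  imports "HOL-Analysis.Analysis" "HOL-Probability.Essential_Supremum"
begin

definition P0 :: "'a measure \<Rightarrow> ('a \<Rightarrow> real) \<Rightarrow> 'a set \<Rightarrow> real" where
  "P0 M p0 B = (LINT x:B|M. p0 x)"

definition Qpert :: "('a \<Rightarrow> real) \<Rightarrow> ('a \<Rightarrow> real) \<Rightarrow> 'a \<Rightarrow> real" where
  "Qpert Q dr x = Q x * exp (dr x)"

definition ess_sup_r :: "'a measure \<Rightarrow> ('a \<Rightarrow> real) \<Rightarrow> ereal" where
  "ess_sup_r M f = esssup M (\<lambda>x. ereal (f x))"

definition argmax_set :: "'a measure \<Rightarrow> ('a \<Rightarrow> real) \<Rightarrow> 'a set" where
  "argmax_set M f = {x \<in> space M. ereal (f x) = ess_sup_r M f}"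

definition p_inf :: "'a measure \<Rightarrow> ('a \<Rightarrow> real) \<Rightarrow> ('a \<Rightarrow> real) \<Rightarrow> 'a \<Rightarrow> real" where
  "p_inf M p0 f x = p0 x * indicator (argmax_set M f) x / P0 M p0 (argmax_set M f)"

definition d_TV :: "'a measure \<Rightarrow> ('a \<Rightarrow> real) \<Rightarrow> ('a \<Rightarrow> real) \<Rightarrow> real" where
  "d_TV M p q = (1/2) * (\<integral>x. \<bar>p x - q x\<bar> \<partial>M)"

end

theory Submission
  imports Defs
begin

text \<open>Push the band \<open>Qs - \<delta> \<le> Q < Qs\<close> just below the maximum up to exactly \<open>Qs\<close> and
  everything else down by the factor \<open>exp (-\<eta>)\<close>. The margin \<open>(Qs - \<delta>) exp \<eta> \<ge> Qs\<close> keeps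
  the lift within \<open>\<eta>\<close>, so the perturbation has sup norm \<open>\<eta>\<close> (attained on the old argmax set),
  and the new argmax set is the band, which is disjoint from the old one. Limits supported
  on disjoint sets are at total variation distance 1.\<close>

lemma ess_sup_r_eq_attained:
  assumes f: "f \<in> borel_measurable M" and le: "\<forall>x\<in>space M. f x \<le> c"
    and S: "S \<in> sets M" "emeasure M S > 0" "\<forall>x\<in>S. f x = c"
  shows "ess_sup_r M f = ereal c"
proof (rule antisym)
  show "ess_sup_r M f \<le> ereal c"
    unfolding ess_sup_r_def using f le by (intro esssup_I) auto
  show "ereal c \<le> ess_sup_r M f"
  proof (rule ccontr)
    assume "\<not> ereal c \<le> ess_sup_r M f"
    have "AE x in M. ereal (f x) \<le> ess_sup_r M f"
      unfolding ess_sup_r_def by (rule esssup_AE)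
    then have "AE x in M. x \<notin> S"
      by eventually_elim (use S(3) \<open>\<not> ereal c \<le> ess_sup_r M f\<close> in force)
    then have "S \<in> null_sets M"
      using S(1) by (simp add: AE_iff_null_sets)
    then show False
      using S(2) by (simp add: null_setsD1)
  qed
qed

lemma argmax_set_eq_level:
  "ess_sup_r M f = ereal c \<Longrightarrow> argmax_set M f = {x \<in> space M. f x = c}"
  unfolding argmax_set_def by simp

lemma emeasure_pos_if_P0_pos:
  assumes B: "B \<in> sets M" and P: "P0 M p0 B > 0"
  shows "emeasure M B > 0"
proof (rule ccontr)
  assume "\<not> emeasure M B > 0"
  then have "B \<in> null_sets M"
    using B by (simp add: null_sets_def zero_less_iff_neq_zero)
  then have "AE x in M. indicator B x *\<^sub>R p0 x = (0::real)"
    by (rule AE_not_in[THEN AE_mp]) simp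
  then have "P0 M p0 B = 0"
    unfolding P0_def set_lebesgue_integral_def by (rule integral_eq_zero_AE)
  then show False
    using P by simp
qed

lemma d_TV_normalized_restrictions_disjoint:
  assumes p0_int: "integrable M p0" and p0_nonneg: "\<forall>x\<in>space M. 0 \<le> p0 x"
    and sets: "A \<in> sets M" "B \<in> sets M" and disj: "A \<inter> B = {}"
    and PA: "P0 M p0 A > 0" and PB: "P0 M p0 B > 0"
  shows "d_TV M (\<lambda>x. p0 x * indicator A x / P0 M p0 A)
                (\<lambda>x. p0 x * indicator B x / P0 M p0 B) = 1"
proof -
  have P0_eq: "(\<integral>x. p0 x * indicator S x \<partial>M) = P0 M p0 S" for S
    unfolding P0_def set_lebesgue_integral_def by (simp add: mult.commute)
  have "(\<integral>x. \<bar>p0 x * indicator A x / P0 M p0 A - p0 x * indicator B x / P0 M p0 B\<bar> \<partial>M)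
      = (\<integral>x. p0 x * indicator A x / P0 M p0 A + p0 x * indicator B x / P0 M p0 B \<partial>M)"
    using p0_nonneg PA PB disj
    by (intro Bochner_Integration.integral_cong) (auto simp: indicator_def)
  also have "\<dots> = (\<integral>x. p0 x * indicator A x \<partial>M) / P0 M p0 A
                 + (\<integral>x. p0 x * indicator B x \<partial>M) / P0 M p0 B"
    using sets p0_int by (simp add: integrable_real_mult_indicator)
  also have "\<dots> = 2"
    using PA PB by (simp add: P0_eq)
  finally show ?thesis
    unfolding d_TV_def by simp
qed

definition band_lift :: "('a \<Rightarrow> real) \<Rightarrow> real \<Rightarrow> real \<Rightarrow> real \<Rightarrow> 'a \<Rightarrow> real" where
  "band_lift Q c \<delta> \<eta> x = (if c - \<delta> \<le> Q x \<and> Q x < c then ln (c / Q x) else - \<eta>)"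

lemma band_lift_measurable:
  assumes "Q \<in> borel_measurable M"
  shows "band_lift Q c \<delta> \<eta> \<in> borel_measurable M"
  using assms unfolding band_lift_def by measurable

lemma abs_band_lift_le:
  assumes "0 < Q x" "0 < \<eta>" and margin: "c \<le> (c - \<delta>) * exp \<eta>"
  shows "\<bar>band_lift Q c \<delta> \<eta> x\<bar> \<le> \<eta>"
proof (cases "c - \<delta> \<le> Q x \<and> Q x < c")
  case True
  then have "c \<le> Q x * exp \<eta>"
    using margin by (smt (verit) exp_gt_zero mult_right_mono)
  then have "1 \<le> c / Q x" "c / Q x \<le> exp \<eta>"
    using True \<open>0 < Q x\<close> by (simp_all add: field_simps)
  then have "0 \<le> ln (c / Q x)" "ln (c / Q x) \<le> \<eta>"
    using ln_le_cancel_iff[of "c / Q x" "exp \<eta>"] by simp_all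
  then show ?thesis
    using True by (simp add: band_lift_def)
next
  case False
  then have "band_lift Q c \<delta> \<eta> x = - \<eta>"
    unfolding band_lift_def by (rule if_not_P)
  then show ?thesis
    using \<open>0 < \<eta>\<close> by simp
qed

lemma Qpert_band_lift:
  assumes "0 < Q x" "Q x \<le> c" "0 < \<eta>"
  shows "Qpert Q (band_lift Q c \<delta> \<eta>) x \<le> c"
    and "Qpert Q (band_lift Q c \<delta> \<eta>) x = c \<longleftrightarrow> c - \<delta> \<le> Q x \<and> Q x < c"
proof -
  have "Q x * exp (- \<eta>) < Q x * 1"
    using assms by (intro mult_strict_left_mono) auto
  then have "Q x * exp (- \<eta>) < c"
    using assms by linarith
  moreover have "Qpert Q (band_lift Q c \<delta> \<eta>) x
      = (if c - \<delta> \<le> Q x \<and> Q x < c then c else Q x * exp (- \<eta>))"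
    using assms by (auto simp: Qpert_def band_lift_def)
  ultimately show "Qpert Q (band_lift Q c \<delta> \<eta>) x \<le> c"
    and "Qpert Q (band_lift Q c \<delta> \<eta>) x = c \<longleftrightarrow> c - \<delta> \<le> Q x \<and> Q x < c"
    by auto
qed

lemma ess_sup_abs_band_lift:
  assumes Q_meas: "Q \<in> borel_measurable M" and Q_pos: "\<forall>x\<in>space M. 0 < Q x"
    and "0 < \<eta>" and margin: "c \<le> (c - \<delta>) * exp \<eta>"
    and top: "emeasure M {x \<in> space M. Q x = c} > 0"
  shows "ess_sup_r M (\<lambda>x. \<bar>band_lift Q c \<delta> \<eta> x\<bar>) = ereal \<eta>"
proof (rule ess_sup_r_eq_attained[OF _ _ _ top])
  show "(\<lambda>x. \<bar>band_lift Q c \<delta> \<eta> x\<bar>) \<in> borel_measurable M"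
    using band_lift_measurable[OF Q_meas] by measurable
  show "{x \<in> space M. Q x = c} \<in> sets M"
    using Q_meas by measurable
  show "\<forall>x\<in>space M. \<bar>band_lift Q c \<delta> \<eta> x\<bar> \<le> \<eta>"
    using Q_pos \<open>0 < \<eta>\<close> margin by (simp add: abs_band_lift_le)
  show "\<forall>x\<in>{x \<in> space M. Q x = c}. \<bar>band_lift Q c \<delta> \<eta> x\<bar> = \<eta>"
    using \<open>0 < \<eta>\<close> by (simp add: band_lift_def)
qed

lemma argmax_set_Qpert_band_lift:
  assumes Q_meas: "Q \<in> borel_measurable M" and Q_pos: "\<forall>x\<in>space M. 0 < Q x"
    and Q_le: "\<forall>x\<in>space M. Q x \<le> c" and "0 < \<eta>"
    and band: "emeasure M {x \<in> space M. c - \<delta> \<le> Q x \<and> Q x < c} > 0"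
  shows "argmax_set M (Qpert Q (band_lift Q c \<delta> \<eta>)) = {x \<in> space M. c - \<delta> \<le> Q x \<and> Q x < c}"
proof -
  have "Qpert Q (band_lift Q c \<delta> \<eta>) \<in> borel_measurable M"
    unfolding Qpert_def using Q_meas band_lift_measurable[OF Q_meas] by measurable
  moreover have "{x \<in> space M. c - \<delta> \<le> Q x \<and> Q x < c} \<in> sets M"
    using Q_meas by measurable
  ultimately have "ess_sup_r M (Qpert Q (band_lift Q c \<delta> \<eta>)) = ereal c"
    using band Q_pos Q_le \<open>0 < \<eta>\<close>
    by (intro ess_sup_r_eq_attained[where S = "{x \<in> space M. c - \<delta> \<le> Q x \<and> Q x < c}"])
       (auto simp: Qpert_band_lift)
  then show ?thesis
    using Q_pos Q_le \<open>0 < \<eta>\<close> by (auto simp: argmax_set_eq_level Qpert_band_lift)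
qed

theorem theorem7:
  fixes M :: "'a measure" and p0 Q :: "'a \<Rightarrow> real" and Qs \<eta> :: real
  assumes sf: "sigma_finite_measure M"
    and p0_meas: "p0 \<in> borel_measurable M"
    and p0_nonneg: "\<forall>x\<in>space M. 0 \<le> p0 x"
    and p0_int: "integrable M p0"
    and p0_one: "(\<integral>x. p0 x \<partial>M) = 1"
    and Q_meas: "Q \<in> borel_measurable M"
    and Q_pos: "\<forall>x\<in>space M. 0 < Q x"
    and Qs_def: "ess_sup_r M Q = ereal Qs"
    and Qs_pos: "0 < Qs"
    and Q_le: "\<forall>x\<in>space M. Q x \<le> Qs"
    and A_pos: "P0 M p0 (argmax_set M Q) > 0"
    and eta_pos: "\<eta> > 0"
    and delta: "\<exists>\<delta>>0. P0 M p0 {x \<in> space M. Qs - \<delta> \<le> Q x \<and> Q x < Qs} > 0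
                       \<and> (Qs - \<delta>) * exp \<eta> \<ge> Qs"
  shows "\<exists>dr. dr \<in> borel_measurable M
           \<and> ess_sup_r M (\<lambda>x. \<bar>dr x\<bar>) = ereal \<eta>
           \<and> P0 M p0 (argmax_set M (Qpert Q dr)) > 0
           \<and> d_TV M (p_inf M p0 (Qpert Q dr)) (p_inf M p0 Q) = 1"
proof -
  obtain \<delta> where P_band: "P0 M p0 {x \<in> space M. Qs - \<delta> \<le> Q x \<and> Q x < Qs} > 0"
    and margin: "Qs \<le> (Qs - \<delta>) * exp \<eta>"
    using delta by blast
  define A where "A = {x \<in> space M. Q x = Qs}"
  define B where "B = {x \<in> space M. Qs - \<delta> \<le> Q x \<and> Q x < Qs}"
  have sets: "A \<in> sets M" "B \<in> sets M"
    unfolding A_def B_def using Q_meas by measurable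
  have argA: "argmax_set M Q = A"
    unfolding A_def by (rule argmax_set_eq_level[OF Qs_def])
  have PA: "P0 M p0 A > 0" and PB: "P0 M p0 B > 0"
    using A_pos P_band by (simp_all add: argA B_def)
  have argB: "argmax_set M (Qpert Q (band_lift Q Qs \<delta> \<eta>)) = B"
    using Q_meas Q_pos Q_le eta_pos emeasure_pos_if_P0_pos[OF sets(2) PB]
    by (simp add: B_def argmax_set_Qpert_band_lift)
  have "d_TV M (p_inf M p0 (Qpert Q (band_lift Q Qs \<delta> \<eta>))) (p_inf M p0 Q) = 1"
    unfolding p_inf_def argA argB using p0_int p0_nonneg sets PB PA
    by (intro d_TV_normalized_restrictions_disjoint) (auto simp: A_def B_def)
  moreover have "ess_sup_r M (\<lambda>x. \<bar>band_lift Q Qs \<delta> \<eta> x\<bar>) = ereal \<eta>"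
    using Q_meas Q_pos eta_pos margin emeasure_pos_if_P0_pos[OF sets(1) PA]
    by (simp add: A_def ess_sup_abs_band_lift)
  ultimately show ?thesis
    using band_lift_measurable[OF Q_meas] PB argB by auto
qed

end
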